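(* In the setting where $\mathbf X = (X_1,\ldots,X_d)$ has continuous margins $F_1,\ldots,F_d$, $\mathbf Y = (1/\{1-F_j(X_j)\})_{j}$ satisfies $t\Pr[\mathbf Y/t\in\cdot\,]\to\mu$ vaguely on $[0,\infty]^d\setminus\{\mathbf 0\}$ with $\mu$ homogeneous of order $-1$, and $H$ is the spectral measure $H(B) = \mu(\{\mathbf y : y_1+\cdots+y_d > 1, \mathbf y/(y_1+\cdots+y_d)\in B\})$, define $N(t) = \sum_{j=1}^d \mathbf 1\{F_j(X_j) > 1 - 1/t\}$. Then for $k = 1,\ldots,d$, \[ \lim_{t\to\infty} t\,\Pr[N(t) \ge k] = \int_{\Delta_{d-1}} w_{(d-k+1)}\, H(\mathrm d\mathbf w), \] where $w_{(1)} \le \cdots \le w_{(d)}$ are the order statistics of $(w_1,\ldots,w_d)$. In particular $\lim_t t\Pr[N(t)\ge 1] = \int \max_j w_j\,H(\mathrm d\mathbf w)$, $\lim_t t\Pr[N(t) = d] = \int \min_j w_j\,H(\mathrm d\mathbf w)$, and for $k = 1,\ldots,d-1$, \[ \lim_{t\to\infty} \mathbb E[N(t) - k \mid N(t)\ge k] = \frac{\int (w_{(1)} + \cdots + w_{(d-k)})\,H(\mathrm d\mathbf w)}{\int w_{(d-k+1)}\,H(\mathrm d\mathbf w)}. \]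
   Context: $\Delta_{d-1} = \{\mathbf w\in[0,1]^d : w_1+\cdots+w_d = 1\}$. Homogeneity of order $-1$: $\mu(a\,\cdot) = a^{-1}\mu(\cdot)$ for $a>0$. *)

theory Defs
  imports "HOL-Analysis.Analysis" "HOL-Probability.Probability"
begin

definition ord_stat :: "('d::finite \<Rightarrow> real) \<Rightarrow> nat \<Rightarrow> real" where
  "ord_stat w k = sorted_list_of_multiset (image_mset w (mset_set (UNIV :: 'd set))) ! (k - 1)"

text \<open>Here nu t f stands for the integral of f against the t-th measure.\<close>
definition vague_conv_E ::
  "(real \<Rightarrow> (('d::finite \<Rightarrow> ennreal) \<Rightarrow> real) \<Rightarrow> real) \<Rightarrow> ('d \<Rightarrow> ennreal) measure \<Rightarrow> bool" where
  "vague_conv_E nu mu \<longleftrightarrow>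
     (\<forall>f :: ('d \<Rightarrow> ennreal) \<Rightarrow> real.
        continuous_on (- {\<lambda>_. 0}) f \<and>
        (\<exists>K. compact K \<and> (\<lambda>_. 0) \<notin> K \<and> (\<forall>y. y \<notin> K \<longrightarrow> f y = 0))
        \<longrightarrow> ((\<lambda>t. nu t f) \<longlongrightarrow> integral\<^sup>L mu f) at_top)"

definition exponent_measure :: "('d::finite \<Rightarrow> ennreal) measure \<Rightarrow> bool" where
  "exponent_measure mu \<longleftrightarrow>
     sets mu = sets borel \<and>
     emeasure mu {\<lambda>_. 0} = 0 \<and>
     (\<forall>K. compact K \<and> (\<lambda>_. 0) \<notin> K \<longrightarrow> emeasure mu K < \<infinity>) \<and>
     (\<forall>a::real. a > 0 \<longrightarrow> (\<forall>B \<in> sets mu.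
        emeasure mu ((\<lambda>y. \<lambda>j. ennreal a * y j) ` B) = emeasure mu B / ennreal a))"

definition spectral_measure_of ::
  "('d::finite \<Rightarrow> ennreal) measure \<Rightarrow> ('d \<Rightarrow> real) measure \<Rightarrow> bool" where
  "spectral_measure_of mu H \<longleftrightarrow>
     sets H = sets borel \<and>
     (\<forall>B \<in> sets borel. emeasure H B =
        emeasure mu {y \<in> space mu. 1 < (\<Sum>j\<in>UNIV. y j) \<and>
                        (\<lambda>j. enn2real (y j / (\<Sum>i\<in>UNIV. y i))) \<in> B})"

end

theory Submission
  imports Defs
begin

text \<open>
  For y in [0,\<infinity>]^d let exceed_set k c be the set of points with at least k coordinates
  above c; the count N(t) is at least k exactly when Y/t lies in exceed_set k 1.
  The proof has three parts.
  (1) Vague convergence plus homogeneity: exceed_set k 1 is squeezed between continuous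
      compactly supported functions whose mu-integrals lie between the measures of
      exceed_set k (1+\<epsilon>) and exceed_set k (1-\<epsilon>), which by homogeneity are
      mu(exceed_set k 1)/(1\<pm>\<epsilon>); hence t P[N(t)\<ge>k] tends to mu(exceed_set k 1).
  (2) Polar coordinates: with r = y_1+...+y_d and w = y/r, the point y lies in
      exceed_set k 1 iff r > 1/w_(d-k+1).  Slicing the simplex into layers on which
      w_(d-k+1) lies in (i/n,(i+1)/n] and using mu{r > s, w \<in> B} = H(B)/s shows
      mu(exceed_set k 1) = \<integral> w_(d-k+1) dH.
  (3) The maximum/minimum cases are k = 1 and k = d, and the conditional mean follows from
      E[(N-k) 1{N\<ge>k}] = \<Sum>_{m>k} P[N\<ge>m].
\<close>

section \<open>Order statistics\<close>

lemma sorted_nth_gt_iff: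
  fixes xs :: "'a::linorder list"
  assumes sorted: "sorted xs" and len: "length xs = d" and k: "1 \<le> k" "k \<le> d"
  shows "c < xs ! (d - k) \<longleftrightarrow> k \<le> length (filter (\<lambda>x. c < x) xs)"
proof -
  have count: "length (filter (\<lambda>x. c < x) xs) = card {i. i < d \<and> c < xs ! i}"
    by (simp add: length_filter_conv_card len)
  show ?thesis
  proof
    assume c: "c < xs ! (d - k)"
    have "{d-k..<d} \<subseteq> {i. i < d \<and> c < xs ! i}"
    proof
      fix i assume "i \<in> {d-k..<d}"
      then have "xs ! (d-k) \<le> xs ! i" using sorted len by (auto intro: sorted_nth_mono)
      with c \<open>i \<in> _\<close> show "i \<in> {i. i < d \<and> c < xs ! i}" by auto
    qed
    from card_mono[OF _ this] show "k \<le> length (filter (\<lambda>x. c < x) xs)"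
      using count k by simp
  next
    assume k_le: "k \<le> length (filter (\<lambda>x. c < x) xs)"
    show "c < xs ! (d - k)"
    proof (rule ccontr)
      assume "\<not> c < xs ! (d - k)"
      then have c: "xs ! (d-k) \<le> c" by simp
      have "{i. i < d \<and> c < xs ! i} \<subseteq> {d-k+1..<d}"
      proof
        fix i assume i: "i \<in> {i. i < d \<and> c < xs ! i}"
        have "\<not> i \<le> d - k"
        proof
          assume "i \<le> d - k"
          then have "xs ! i \<le> xs ! (d-k)" using sorted len k by (auto intro: sorted_nth_mono)
          with c i show False by auto
        qed
        with i show "i \<in> {d-k+1..<d}" by auto
      qed
      from card_mono[OF _ this] have "card {i. i < d \<and> c < xs ! i} \<le> k - 1" using k by auto
      with k_le count k show False by simp
    qed
  qed
qed

lemma ord_stat_list: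
  fixes w :: "'d::finite \<Rightarrow> real"
  defines "xs \<equiv> sorted_list_of_multiset (image_mset w (mset_set (UNIV :: 'd set)))"
  shows "sorted xs" "length xs = CARD('d)"
    "\<And>P. length (filter P xs) = card {j. P (w j)}"
proof -
  show "sorted xs" unfolding xs_def by simp
  have m: "mset xs = image_mset w (mset_set UNIV)" unfolding xs_def by simp
  show "length xs = CARD('d)" by (metis m size_image_mset size_mset size_mset_set)
  fix P
  have "mset (filter P xs) = image_mset w (mset_set {j. P (w j)})"
    by (simp add: m filter_mset_image_mset filter_mset_mset_set)
  then show "length (filter P xs) = card {j. P (w j)}"
    by (metis size_image_mset size_mset size_mset_set)
qed

abbreviation kth_largest :: "nat \<Rightarrow> ('d::finite \<Rightarrow> real) \<Rightarrow> real" where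
  "kth_largest k w \<equiv> ord_stat w (CARD('d) - k + 1)"

lemma kth_largest_gt_iff:
  fixes w :: "'d::finite \<Rightarrow> real"
  assumes "1 \<le> k" "k \<le> CARD('d)"
  shows "c < kth_largest k w \<longleftrightarrow> k \<le> card {j. c < w j}"
proof -
  define xs where "xs = sorted_list_of_multiset (image_mset w (mset_set (UNIV :: 'd set)))"
  have "kth_largest k w = xs ! (CARD('d) - k)"
    unfolding ord_stat_def xs_def by simp
  then show ?thesis
    using ord_stat_list[where w=w, folded xs_def] sorted_nth_gt_iff[of xs "CARD('d)" k c] assms
    by simp
qed

lemma real_eq_by_lower_bounds:
  fixes a b :: real assumes "\<And>c. c < a \<longleftrightarrow> c < b" shows "a = b"
  by (metis assms linorder_neqE_linordered_idom order.irrefl)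

lemma measurable_card_ge:
  assumes "\<And>j::'d::finite. Measurable.pred M (P j)"
  shows "Measurable.pred M (\<lambda>x. k \<le> card {j. P j x})"
proof -
  have "(\<lambda>x. real (card {j. P j x})) = (\<lambda>x. \<Sum>j\<in>UNIV. if P j x then 1 else 0)"
    by (simp add: sum.If_cases)
  also have "\<dots> \<in> borel_measurable M" using assms by measurable
  finally have "Measurable.pred M (\<lambda>x. real k \<le> real (card {j. P j x}))" by measurable
  then show ?thesis by simp
qed

text \<open>Order statistics are Borel measurable, since {w. c < w_(m)} is a counting set.\<close>
lemma ord_stat_measurable:
  assumes "1 \<le> m" "m \<le> CARD('d)"
  shows "(\<lambda>w::'d::finite \<Rightarrow> real. ord_stat w m) \<in> borel_measurable borel"
proof (rule borel_measurable_iff_greater[THEN iffD2], intro allI)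
  fix c
  have m: "m = CARD('d) - (CARD('d) - m + 1) + 1" using assms by simp
  have "{w::'d \<Rightarrow> real. c < ord_stat w m} = {w. CARD('d) - m + 1 \<le> card {j. c < w j}}"
    by (subst m, subst kth_largest_gt_iff) (use assms in auto)
  also have "\<dots> \<in> sets borel"
    using measurable_card_ge[where M=borel and P="\<lambda>j w. c < w j"] by (simp add: pred_def)
  finally show "{w::'d\<Rightarrow>real \<in> space borel. c < ord_stat w m} \<in> sets borel" by simp
qed

lemma ord_stat_max: "ord_stat w CARD('d) = Max (range (w::'d::finite \<Rightarrow> real))"
proof (rule real_eq_by_lower_bounds)
  fix c
  have "c < kth_largest 1 w \<longleftrightarrow> 1 \<le> card {j. c < w j}"
    by (rule kth_largest_gt_iff) auto
  also have "\<dots> \<longleftrightarrow> (\<exists>j. c < w j)" by (auto simp: Suc_le_eq card_gt_0_iff)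
  also have "\<dots> \<longleftrightarrow> c < Max (range w)" by (auto simp: Max_gr_iff)
  finally show "c < ord_stat w CARD('d) \<longleftrightarrow> c < Max (range w)" by simp
qed

lemma ord_stat_min: "ord_stat w 1 = Min (range (w::'d::finite \<Rightarrow> real))"
proof (rule real_eq_by_lower_bounds)
  fix c
  have "c < kth_largest CARD('d) w \<longleftrightarrow> CARD('d) \<le> card {j. c < w j}"
    by (rule kth_largest_gt_iff) auto
  also have "\<dots> \<longleftrightarrow> {j. c < w j} = UNIV"
    by (metis card_seteq finite top_greatest card_mono order_antisym top.extremum)
  also have "\<dots> \<longleftrightarrow> c < Min (range w)" by (auto simp: Min_gr_iff)
  finally show "c < ord_stat w 1 \<longleftrightarrow> c < Min (range w)" by simp
qed

lemma kth_largest_unit_bounds: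
  assumes k: "1 \<le> k" "k \<le> CARD('d)" and w: "\<And>j. 0 \<le> w j \<and> w j \<le> (1::real)"
  shows "0 \<le> kth_largest k (w :: 'd::finite \<Rightarrow> real)" "kth_largest k w \<le> 1"
proof -
  have "\<not> 1 < kth_largest k w"
  proof
    assume "1 < kth_largest k w"
    then have "k \<le> card {j. 1 < w j}" using kth_largest_gt_iff[OF k] by blast
    moreover have "{j. 1 < w j} = {}" using w by (auto simp: not_less)
    ultimately show False using k by simp
  qed
  then show "kth_largest k w \<le> 1" by simp
  show "0 \<le> kth_largest k w"
  proof (rule ccontr)
    assume "\<not> 0 \<le> kth_largest k w"
    then have "kth_largest k w < 0" by simp
    then have "{j. kth_largest k w < w j} = UNIV" using w by (auto intro: less_le_trans)
    then show False using kth_largest_gt_iff[OF k, of "kth_largest k w" w] k by simp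
  qed
qed

section \<open>Counting sets in [0,\<infinity>]^d\<close>

text \<open>[0,\<infinity>]^d is compact (Tychonoff), so closed subsets avoiding 0 have finite mu-measure.\<close>
lemma compact_UNIV_ennreal_fun: "compact (UNIV :: ('d::finite \<Rightarrow> ennreal) set)"
proof -
  have "compact_space (product_topology (\<lambda>i::'d. (euclidean::ennreal topology)) UNIV)"
    unfolding compact_space_product_topology
    by (auto simp: compact_space_def compact_UNIV)
  then show ?thesis
    by (simp add: euclidean_product_topology compact_space_def)
qed

lemma card_ge_iff_subset:
  "k \<le> card {j::'d::finite. P j} \<longleftrightarrow> (\<exists>S. card S = k \<and> (\<forall>j\<in>S. P j))"
proof
  assume "k \<le> card {j. P j}"
  then obtain S where "S \<subseteq> {j. P j}" "card S = k" using obtain_subset_with_card_n by blast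
  then show "\<exists>S. card S = k \<and> (\<forall>j\<in>S. P j)" by auto
next
  assume "\<exists>S. card S = k \<and> (\<forall>j\<in>S. P j)"
  then obtain S where "card S = k" "\<forall>j\<in>S. P j" by blast
  then show "k \<le> card {j. P j}" by (metis card_mono finite mem_Collect_eq subsetI)
qed

lemma card_ge_set_eq:
  "{y. k \<le> card {j::'d::finite. P j y}} = (\<Union>S\<in>{S. card S = k}. \<Inter>j\<in>S. {y. P j y})"
  by (auto simp: card_ge_iff_subset)

lemma closed_card_ge: "closed {y::'d::finite \<Rightarrow> ennreal. k \<le> card {j. c \<le> y j}}"
  unfolding card_ge_set_eq[where P="\<lambda>j y. c \<le> y j"]
  by (intro closed_UN ballI closed_INT closed_Collect_le continuous_on_const
      continuous_on_product_coordinates) auto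

lemma open_card_gt: "open {y::'d::finite \<Rightarrow> ennreal. k \<le> card {j. c < y j}}"
  unfolding card_ge_set_eq[where P="\<lambda>j y. c < y j"]
  by (intro open_UN ballI open_INT open_Collect_less continuous_on_const
      continuous_on_product_coordinates) auto

lemma compact_card_ge: "compact {y::'d::finite \<Rightarrow> ennreal. k \<le> card {j. c \<le> y j}}"
  using closed_Int_compact[OF closed_card_ge compact_UNIV_ennreal_fun] by simp

section \<open>Exponent measures\<close>

lemma ennreal_mult_less_cancel:
  assumes a: "0 < a" shows "ennreal a * x < ennreal a * z \<longleftrightarrow> x < z"
proof
  show "x < z" if "ennreal a * x < ennreal a * z" using that
    by (metis linorder_not_less mult_left_mono zero_le)
  show "ennreal a * x < ennreal a * z" if "x < z"
    using a that by (intro ennreal_mult_strict_left_mono) auto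
qed

lemma scale_image_Collect:
  assumes a: "0 < a" and Q: "\<And>y. Q' (\<lambda>j. ennreal a * y j) \<longleftrightarrow> Q y"
  shows "{y. Q' y} = (\<lambda>y j. ennreal a * y j) ` {y::'d \<Rightarrow> ennreal. Q y}"
proof
  show "(\<lambda>y j. ennreal a * y j) ` {y. Q y} \<subseteq> {y. Q' y}" using Q by auto
  show "{y. Q' y} \<subseteq> (\<lambda>y j. ennreal a * y j) ` {y. Q y}"
  proof
    fix y assume y: "y \<in> {y. Q' y}"
    have inv: "(\<lambda>j. ennreal a * (ennreal (1/a) * y j)) = y"
    proof -
      have "ennreal a * ennreal (1/a) = 1" using a by (simp flip: ennreal_mult)
      then show ?thesis by (simp flip: mult.assoc)
    qed
    have "Q (\<lambda>j. ennreal (1/a) * y j)" using y Q[of "\<lambda>j. ennreal (1/a) * y j"] inv by simp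
    then show "y \<in> (\<lambda>y j. ennreal a * y j) ` {y. Q y}"
      by (subst inv[symmetric]) (rule imageI, simp)
  qed
qed

lemma exponent_measure_sets: "exponent_measure mu \<Longrightarrow> sets mu = sets borel"
  unfolding exponent_measure_def by simp

lemma exponent_measure_space: "exponent_measure mu \<Longrightarrow> space mu = UNIV"
  unfolding exponent_measure_def by (metis sets_eq_imp_space_eq space_borel)

lemma exponent_measure_compact_finite:
  assumes "exponent_measure mu" "compact K" "(\<lambda>_. 0) \<notin> K"
  shows "emeasure mu K < \<infinity>"
  using assms unfolding exponent_measure_def by auto

lemma exponent_measure_scale:
  assumes mu: "exponent_measure mu" and a: "0 < a" and Q: "{y. Q y} \<in> sets borel"
    and eq: "\<And>y. Q' (\<lambda>j. ennreal a * y j) \<longleftrightarrow> Q y"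
  shows "emeasure mu {y. Q' y} = emeasure mu {y::'d::finite \<Rightarrow> ennreal. Q y} / ennreal a"
proof -
  have "emeasure mu ((\<lambda>y j. ennreal a * y j) ` {y. Q y}) = emeasure mu {y. Q y} / ennreal a"
    using mu a Q unfolding exponent_measure_def by auto
  then show ?thesis using scale_image_Collect[of a Q' Q, OF a eq] by simp
qed

text \<open>Points with an infinite coordinate form a mu-null set: the set is invariant under
  scaling by 2 and has finite measure, so its measure equals half of itself.\<close>
lemma exponent_measure_infinite_null:
  assumes mu: "exponent_measure mu"
  shows "{y::'d::finite \<Rightarrow> ennreal. \<exists>j. y j = top} \<in> null_sets mu"
proof -
  have closed_j: "closed {y::'d \<Rightarrow> ennreal. y j = top}" for j
    by (intro closed_Collect_eq continuous_on_const continuous_on_product_coordinates)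
  have null_j: "emeasure mu {y::'d \<Rightarrow> ennreal. y j = top} = 0" for j
  proof -
    let ?T = "{y::'d \<Rightarrow> ennreal. y j = top}"
    have "compact ?T" using closed_Int_compact[OF closed_j compact_UNIV_ennreal_fun] by simp
    then have "emeasure mu ?T < \<infinity>" by (intro exponent_measure_compact_finite[OF mu]) auto
    then obtain x where x: "emeasure mu ?T = ennreal x" "0 \<le> x"
      by (cases "emeasure mu ?T") auto
    have "emeasure mu ?T = emeasure mu ?T / ennreal 2"
      using exponent_measure_scale[OF mu, of 2 "\<lambda>y. y j = top" "\<lambda>y. y j = top"]
        borel_closed[OF closed_j] by (simp add: ennreal_mult_eq_top_iff)
    then have "ennreal x = ennreal (x / 2)" using x divide_ennreal[of x 2] by simp
    then show ?thesis using x by (simp add: ennreal_inj)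
  qed
  have union: "{y::'d \<Rightarrow> ennreal. \<exists>j. y j = top} = (\<Union>j. {y. y j = top})" by auto
  have sets_j: "range (\<lambda>j. {y::'d \<Rightarrow> ennreal. y j = top}) \<subseteq> sets mu"
    using closed_j borel_closed exponent_measure_sets[OF mu] by auto
  then have "emeasure mu (\<Union>j. {y::'d \<Rightarrow> ennreal. y j = top})
      \<le> (\<Sum>j\<in>UNIV. emeasure mu {y::'d \<Rightarrow> ennreal. y j = top})"
    by (intro emeasure_subadditive_finite) auto
  then show ?thesis
    using null_j sets_j unfolding union by (auto simp: null_sets_def)
qed

definition exceed_set :: "nat \<Rightarrow> ennreal \<Rightarrow> ('d::finite \<Rightarrow> ennreal) set" where
  "exceed_set k c = {y. k \<le> card {j. c < y j}}"

lemma exceed_set_borel: "exceed_set k c \<in> sets borel"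
  unfolding exceed_set_def by (rule borel_open[OF open_card_gt])

lemma exceed_set_finite:
  assumes mu: "exponent_measure mu" and k: "1 \<le> k" and c: "0 < c"
  shows "emeasure mu (exceed_set k (ennreal c) :: ('d::finite \<Rightarrow> ennreal) set) < \<infinity>"
proof -
  let ?K = "{y::'d \<Rightarrow> ennreal. k \<le> card {j. ennreal c \<le> y j}}"
  have "card {j. ennreal c < y j} \<le> card {j. ennreal c \<le> y j}" for y :: "'d \<Rightarrow> ennreal"
    by (rule card_mono) auto
  then have "exceed_set k (ennreal c) \<subseteq> ?K" unfolding exceed_set_def by (auto intro: le_trans)
  moreover have "emeasure mu ?K < \<infinity>"
    using exponent_measure_compact_finite[OF mu compact_card_ge] k c by auto
  moreover have "?K \<in> sets mu"
    using exponent_measure_sets[OF mu] borel_closed[OF closed_card_ge] by auto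
  ultimately show ?thesis using emeasure_mono[of "exceed_set k (ennreal c)" ?K mu] by simp
qed

lemma measure_exceed_set_scale:
  assumes mu: "exponent_measure mu" and c: "0 < c"
  shows "measure mu (exceed_set k (ennreal c) :: ('d::finite \<Rightarrow> ennreal) set)
       = measure mu (exceed_set k 1) / c"
proof -
  have "emeasure mu (exceed_set k (ennreal c) :: ('d \<Rightarrow> ennreal) set)
      = emeasure mu (exceed_set k 1) / ennreal c"
    unfolding exceed_set_def
  proof (rule exponent_measure_scale[OF mu c])
    show "{y::'d\<Rightarrow>ennreal. k \<le> card {j. 1 < y j}} \<in> sets borel"
      using exceed_set_borel unfolding exceed_set_def by auto
    fix y :: "'d \<Rightarrow> ennreal"
    have "\<And>j. ennreal c < ennreal c * y j \<longleftrightarrow> 1 < y j"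
      using ennreal_mult_less_cancel[OF c, of 1] by simp
    then show "k \<le> card {j. ennreal c < ennreal c * y j} \<longleftrightarrow> k \<le> card {j. 1 < y j}" by simp
  qed
  also have "\<dots> = emeasure mu (exceed_set k 1) * ennreal (1/c)"
    using c by (simp add: divide_ennreal_def inverse_ennreal inverse_eq_divide)
  finally show ?thesis
    using c by (simp add: enn2real_mult measure_def)
qed

section \<open>From vague convergence to exceedance probabilities\<close>

definition ramp :: "real \<Rightarrow> real \<Rightarrow> ennreal \<Rightarrow> real" where
  "ramp a b x = max 0 (min 1 ((enn2real (min x (ennreal b)) - a) / (b - a)))"

text \<open>A continuous function that is 1 when at least k coordinates reach b and 0 unless at
  least k coordinates exceed a: a continuous sandwich for exceedance indicators.\<close>
definition count_ramp :: "nat \<Rightarrow> real \<Rightarrow> real \<Rightarrow> ('d::finite \<Rightarrow> ennreal) \<Rightarrow> real" where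
  "count_ramp k a b y = min 1 (\<Sum>S\<in>{S. card S = k}. \<Prod>j\<in>S. ramp a b (y j))"

text \<open>Truncation at a finite level makes enn2real continuous on [0,\<infinity>].\<close>
lemma continuous_enn2real_min: "continuous_on UNIV (\<lambda>x::ennreal. enn2real (min x (ennreal b)))"
proof -
  have "isCont (\<lambda>x::ennreal. enn2real (min x (ennreal b))) x0" for x0
  proof -
    have "min x0 (ennreal b) \<noteq> top"
      by (metis ennreal_neq_top min.absorb_iff2 min.cobounded2 top.extremum_uniqueI)
    then have fin: "min x0 (ennreal b) = ennreal (enn2real (min x0 (ennreal b)))"
      by (simp add: ennreal_enn2real_if)
    have "((\<lambda>x. min x (ennreal b)) \<longlongrightarrow> min x0 (ennreal b)) (at x0)"
      by (intro tendsto_intros)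
    then have "((\<lambda>x. min x (ennreal b)) \<longlongrightarrow> ennreal (enn2real (min x0 (ennreal b)))) (at x0)"
      using fin by simp
    from tendsto_enn2real[OF this] show ?thesis unfolding isCont_def by simp
  qed
  then show ?thesis by (simp add: continuous_at_imp_continuous_on)
qed

lemma ramp_bounds: "0 \<le> ramp a b x" "ramp a b x \<le> 1"
  unfolding ramp_def by auto

lemma ramp_one: assumes "0 \<le> a" "a < b" "ennreal b \<le> x" shows "ramp a b x = 1"
proof -
  have "min x (ennreal b) = ennreal b" using assms by simp
  then show ?thesis using assms unfolding ramp_def by simp
qed

lemma ramp_nonzero: assumes "0 \<le> a" "a < b" "ramp a b x \<noteq> 0" shows "ennreal a < x"
proof (rule ccontr)
  assume "\<not> ennreal a < x"
  then have "min x (ennreal b) \<le> ennreal a" by (simp add: min.coboundedI1)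
  then have "enn2real (min x (ennreal b)) \<le> a"
    using assms by (metis enn2real_ennreal enn2real_mono ennreal_less_top)
  then have "(enn2real (min x (ennreal b)) - a) / (b - a) \<le> 0"
    using assms by (simp add: divide_nonpos_pos)
  then show False using assms(3) unfolding ramp_def by simp
qed

lemma continuous_ramp: "continuous_on UNIV (ramp a b)"
  unfolding ramp_def divide_inverse
  by (intro continuous_on_max continuous_on_min continuous_on_const continuous_on_mult
      continuous_on_diff continuous_enn2real_min)

lemma count_ramp_bounds: "0 \<le> count_ramp k a b y" "count_ramp k a b y \<le> 1"
  unfolding count_ramp_def using ramp_bounds by (auto intro!: sum_nonneg prod_nonneg)

lemma continuous_count_ramp:
  "continuous_on UNIV (count_ramp k a b :: ('d::finite \<Rightarrow> ennreal) \<Rightarrow> real)"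
  unfolding count_ramp_def
  by (intro continuous_on_min continuous_on_const continuous_on_sum continuous_on_prod
      continuous_on_compose2[OF continuous_ramp continuous_on_product_coordinates]) auto

lemma count_ramp_measurable: "count_ramp k a b \<in> borel_measurable borel"
  by (rule borel_measurable_continuous_onI[OF continuous_count_ramp])

lemma count_ramp_nonzero:
  assumes "0 \<le> a" "a < b" "count_ramp k a b y \<noteq> 0"
  shows "k \<le> card {j::'d::finite. ennreal a < y j}"
proof -
  have "(\<Sum>S\<in>{S. card S = k}. \<Prod>j\<in>S. ramp a b (y j)) \<noteq> 0"
    using assms(3) unfolding count_ramp_def by auto
  then obtain S :: "'d set" where S: "card S = k" "(\<Prod>j\<in>S. ramp a b (y j)) \<noteq> 0"
    by (metis (mono_tags, lifting) mem_Collect_eq sum.neutral)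
  then have "\<forall>j\<in>S. ennreal a < y j" using ramp_nonzero[OF assms(1,2)] by auto
  with S show ?thesis using card_ge_iff_subset by blast
qed

lemma count_ramp_le_indicator:
  fixes y :: "'d::finite \<Rightarrow> ennreal"
  assumes "0 < a" "a < b"
  shows "count_ramp k a b y \<le> indicator (exceed_set k (ennreal a)) y"
proof (cases "count_ramp k a b y = 0")
  case False
  then have "y \<in> exceed_set k (ennreal a)"
    using count_ramp_nonzero[of a b k y] assms unfolding exceed_set_def by auto
  then show ?thesis using count_ramp_bounds[of k a b y] by simp
qed simp

lemma indicator_le_count_ramp:
  fixes y :: "'d::finite \<Rightarrow> ennreal"
  assumes "0 \<le> a" "a < b"
  shows "indicator (exceed_set k (ennreal b)) y \<le> count_ramp k a b y"
proof (cases "y \<in> exceed_set k (ennreal b)")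
  case True
  then have "k \<le> card {j. ennreal b < y j}" unfolding exceed_set_def by simp
  also have "\<dots> \<le> card {j. ennreal b \<le> y j}" by (rule card_mono) auto
  finally obtain S :: "'d set" where S: "card S = k" "\<forall>j\<in>S. ennreal b \<le> y j"
    using card_ge_iff_subset by blast
  have "(\<Prod>j\<in>S. ramp a b (y j)) = 1" using S assms ramp_one by simp
  moreover have "(\<Prod>j\<in>S. ramp a b (y j)) \<le> (\<Sum>S\<in>{S. card S = k}. \<Prod>j\<in>S. ramp a b (y j))"
    by (rule member_le_sum) (use S ramp_bounds in \<open>auto intro!: prod_nonneg\<close>)
  ultimately have "count_ramp k a b y = 1" unfolding count_ramp_def by simp
  then show ?thesis by simp
qed (simp add: count_ramp_bounds)

lemma integral_count_ramp_bounds: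
  assumes mu: "exponent_measure mu" and k: "1 \<le> k" and ab: "0 < a" "a < b"
  shows "measure mu (exceed_set k (ennreal b))
           \<le> integral\<^sup>L mu (count_ramp k a b :: ('d::finite \<Rightarrow> ennreal) \<Rightarrow> real)"
    and "integral\<^sup>L mu (count_ramp k a b :: ('d \<Rightarrow> ennreal) \<Rightarrow> real)
           \<le> measure mu (exceed_set k (ennreal a))"
proof -
  have sets: "exceed_set k c \<in> sets mu" for c :: ennreal
    using exceed_set_borel exponent_measure_sets[OF mu] by simp
  have ind_int: "integrable mu (indicator (exceed_set k (ennreal c)) :: ('d \<Rightarrow> ennreal) \<Rightarrow> real)"
    if "0 < c" for c
    using sets exceed_set_finite[OF mu k that] by (intro integrable_real_indicator) auto
  have U_int: "integrable mu (count_ramp k a b :: ('d \<Rightarrow> ennreal) \<Rightarrow> real)"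
  proof (rule Bochner_Integration.integrable_bound[OF ind_int[OF ab(1)]])
    show "count_ramp k a b \<in> borel_measurable mu"
      using mu count_ramp_measurable unfolding exponent_measure_def
      by (simp cong: measurable_cong_sets)
    show "AE y in mu. norm (count_ramp k a b y) \<le> norm (indicator (exceed_set k a) y :: real)"
      using count_ramp_le_indicator[OF ab]
      by (intro AE_I2) (simp add: abs_of_nonneg[OF count_ramp_bounds(1)])
  qed
  show "measure mu (exceed_set k (ennreal b)) \<le> integral\<^sup>L mu (count_ramp k a b)"
    using integral_mono[OF ind_int U_int indicator_le_count_ramp] ab
      exponent_measure_space[OF mu] by simp
  show "integral\<^sup>L mu (count_ramp k a b) \<le> measure mu (exceed_set k (ennreal a))"
    using integral_mono[OF U_int ind_int count_ramp_le_indicator[OF ab]] ab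
      exponent_measure_space[OF mu] by simp
qed

lemma prob_exceed_set_bounds:
  fixes Z :: "'a \<Rightarrow> 'd::finite \<Rightarrow> ennreal"
  assumes "prob_space M" and Z: "Z \<in> borel_measurable M" and ab: "0 < a" "a < b"
  shows "measure M {\<omega> \<in> space M. Z \<omega> \<in> exceed_set k (ennreal b)}
           \<le> integral\<^sup>L M (\<lambda>\<omega>. count_ramp k a b (Z \<omega>))"
    and "integral\<^sup>L M (\<lambda>\<omega>. count_ramp k a b (Z \<omega>))
           \<le> measure M {\<omega> \<in> space M. Z \<omega> \<in> exceed_set k (ennreal a)}"
proof -
  interpret prob_space M by fact
  have U_int: "integrable M (\<lambda>\<omega>. count_ramp k a b (Z \<omega>))"
    using measurable_compose[OF Z count_ramp_measurable]
    by (intro integrable_const_bound[where B=1] AE_I2)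
      (auto simp: abs_of_nonneg[OF count_ramp_bounds(1)] count_ramp_bounds(2))
  have P_eq: "measure M {\<omega> \<in> space M. Z \<omega> \<in> exceed_set k c}
      = integral\<^sup>L M (\<lambda>\<omega>. indicator (exceed_set k c) (Z \<omega>))" for c
  proof -
    have "integral\<^sup>L M (\<lambda>\<omega>. indicator (exceed_set k c) (Z \<omega>) :: real)
        = integral\<^sup>L M (indicator {\<omega> \<in> space M. Z \<omega> \<in> exceed_set k c})"
      by (intro Bochner_Integration.integral_cong) (auto simp: indicator_def)
    then show ?thesis by (simp add: Collect_conj_eq Int_commute)
  qed
  have ind_int: "integrable M (\<lambda>\<omega>. indicator (exceed_set k c) (Z \<omega>) :: real)" for c
    using measurable_compose[OF Z borel_measurable_indicator[OF exceed_set_borel]]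
    by (intro integrable_const_bound[where B=1]) auto
  show "measure M {\<omega> \<in> space M. Z \<omega> \<in> exceed_set k (ennreal b)}
      \<le> integral\<^sup>L M (\<lambda>\<omega>. count_ramp k a b (Z \<omega>))"
    unfolding P_eq using ab by (intro integral_mono ind_int U_int indicator_le_count_ramp) auto
  show "integral\<^sup>L M (\<lambda>\<omega>. count_ramp k a b (Z \<omega>))
      \<le> measure M {\<omega> \<in> space M. Z \<omega> \<in> exceed_set k (ennreal a)}"
    unfolding P_eq using ab by (intro integral_mono ind_int U_int count_ramp_le_indicator) auto
qed

lemma vague_conv_count_ramp:
  assumes v: "vague_conv_E nu mu" and k: "1 \<le> k" and ab: "0 < a" "a < b"
  shows "((\<lambda>t. nu t (count_ramp k a b))
           \<longlongrightarrow> integral\<^sup>L mu (count_ramp k a b :: ('d::finite \<Rightarrow> ennreal) \<Rightarrow> real)) at_top"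
proof -
  let ?K = "{y::'d \<Rightarrow> ennreal. k \<le> card {j. ennreal a \<le> y j}}"
  have "count_ramp k a b y = 0" if y: "y \<notin> ?K" for y
  proof (rule ccontr)
    assume "count_ramp k a b y \<noteq> 0"
    then have "k \<le> card {j. ennreal a < y j}" using count_ramp_nonzero[of a b k y] ab by simp
    also have "\<dots> \<le> card {j. ennreal a \<le> y j}" by (rule card_mono) auto
    finally show False using y by simp
  qed
  moreover have "(\<lambda>_. 0) \<notin> ?K" using k ab by simp
  moreover have "continuous_on (- {\<lambda>_. 0}) (count_ramp k a b :: ('d \<Rightarrow> ennreal) \<Rightarrow> real)"
    using continuous_count_ramp continuous_on_subset by blast
  ultimately show ?thesis using v compact_card_ge unfolding vague_conv_E_def by blast
qed

lemma tendsto_by_eps_bounds: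
  fixes f :: "real \<Rightarrow> real" and G :: real
  assumes bounds: "\<And>\<epsilon>. 0 < \<epsilon> \<Longrightarrow> \<epsilon> < 1 \<Longrightarrow>
     (\<forall>\<^sub>F t in at_top. f t \<le> G/(1-\<epsilon>) + \<epsilon>) \<and> (\<forall>\<^sub>F t in at_top. G/(1+\<epsilon>) - \<epsilon> \<le> f t)"
  shows "(f \<longlongrightarrow> G) at_top"
proof (rule order_tendstoI)
  have small: "\<forall>\<^sub>F \<epsilon> in at_right (0::real). 0 < \<epsilon> \<and> \<epsilon> < 1"
    by (auto simp: eventually_at_right_field intro!: exI[of _ 1])
  fix y assume y: "G < y"
  have "((\<lambda>\<epsilon>. G/(1-\<epsilon>) + \<epsilon>) \<longlongrightarrow> G/(1-0) + 0) (at_right (0::real))"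
    by (intro tendsto_intros) auto
  then have "\<forall>\<^sub>F \<epsilon> in at_right (0::real). G/(1-\<epsilon>) + \<epsilon> < y"
    using y by (intro order_tendstoD) auto
  then obtain \<epsilon> where e: "0 < \<epsilon>" "\<epsilon> < 1" "G/(1-\<epsilon>) + \<epsilon> < y"
    using eventually_happens[OF eventually_conj[OF small]] trivial_limit_at_right_real by blast
  then show "\<forall>\<^sub>F t in at_top. f t < y"
    using bounds[OF e(1,2)] by (auto elim: eventually_mono)
next
  have small: "\<forall>\<^sub>F \<epsilon> in at_right (0::real). 0 < \<epsilon> \<and> \<epsilon> < 1"
    by (auto simp: eventually_at_right_field intro!: exI[of _ 1])
  fix y assume y: "y < G"
  have "((\<lambda>\<epsilon>. G/(1+\<epsilon>) - \<epsilon>) \<longlongrightarrow> G/(1+0) - 0) (at_right (0::real))"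
    by (intro tendsto_intros) auto
  then have "\<forall>\<^sub>F \<epsilon> in at_right (0::real). y < G/(1+\<epsilon>) - \<epsilon>"
    using y by (intro order_tendstoD) auto
  then obtain \<epsilon> where e: "0 < \<epsilon>" "\<epsilon> < 1" "y < G/(1+\<epsilon>) - \<epsilon>"
    using eventually_happens[OF eventually_conj[OF small]] trivial_limit_at_right_real by blast
  then show "\<forall>\<^sub>F t in at_top. y < f t"
    using bounds[OF e(1,2)] by (auto elim: eventually_mono)
qed

text \<open>Part (1) of the proof: vague convergence of t P[Z_t \<in> .] to mu yields convergence
  on the exceedance set, although its boundary need not be mu-null a priori.\<close>
lemma exceedance_prob_limit:
  fixes M :: "'a measure" and Z :: "real \<Rightarrow> 'a \<Rightarrow> 'd::finite \<Rightarrow> ennreal"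
  assumes prob: "prob_space M"
    and Z: "\<And>t j. (\<lambda>\<omega>. Z t \<omega> j) \<in> borel_measurable M"
    and mu: "exponent_measure mu"
    and v: "vague_conv_E (\<lambda>t f. t * integral\<^sup>L M (\<lambda>\<omega>. f (Z t \<omega>))) mu"
    and k: "1 \<le> k"
  shows "((\<lambda>t. t * measure M {\<omega> \<in> space M. Z t \<omega> \<in> exceed_set k 1})
           \<longlongrightarrow> measure mu (exceed_set k 1 :: ('d \<Rightarrow> ennreal) set)) at_top"
proof (rule tendsto_by_eps_bounds)
  define G where "G = measure mu (exceed_set k 1 :: ('d \<Rightarrow> ennreal) set)"
  define P where "P t = measure M {\<omega> \<in> space M. Z t \<omega> \<in> exceed_set k 1}" for t
  fix \<epsilon> :: real assume e: "0 < \<epsilon>" "\<epsilon> < 1"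
  have Zt: "Z t \<in> borel_measurable M" for t
    by (rule measurable_coordinatewise_then_product) (rule Z)
  let ?u = "count_ramp k (1-\<epsilon>) 1 :: ('d \<Rightarrow> ennreal) \<Rightarrow> real"
  have ev_u: "\<forall>\<^sub>F t in at_top. t * integral\<^sup>L M (\<lambda>\<omega>. ?u (Z t \<omega>)) < integral\<^sup>L mu ?u + \<epsilon>"
    using vague_conv_count_ramp[OF v k, of "1-\<epsilon>" 1] e by (intro order_tendstoD) auto
  have int_u: "integral\<^sup>L mu ?u \<le> G/(1-\<epsilon>)"
    using integral_count_ramp_bounds(2)[OF mu k, of "1-\<epsilon>" 1] e
      measure_exceed_set_scale[OF mu, of "1-\<epsilon>" k] unfolding G_def by simp
  have P_u: "P t \<le> integral\<^sup>L M (\<lambda>\<omega>. ?u (Z t \<omega>))" for t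
    using prob_exceed_set_bounds(1)[OF prob Zt[of t], of "1-\<epsilon>" 1 k] e unfolding P_def by simp
  have upper: "\<forall>\<^sub>F t in at_top. t * P t \<le> G/(1-\<epsilon>) + \<epsilon>"
    using ev_u eventually_ge_at_top[of 0]
  proof eventually_elim
    case (elim t)
    then show ?case using mult_left_mono[OF P_u[of t], of t] int_u by linarith
  qed
  let ?l = "count_ramp k 1 (1+\<epsilon>) :: ('d \<Rightarrow> ennreal) \<Rightarrow> real"
  have ev_l: "\<forall>\<^sub>F t in at_top. integral\<^sup>L mu ?l - \<epsilon> < t * integral\<^sup>L M (\<lambda>\<omega>. ?l (Z t \<omega>))"
    using vague_conv_count_ramp[OF v k, of 1 "1+\<epsilon>"] e by (intro order_tendstoD) auto
  have int_l: "G/(1+\<epsilon>) \<le> integral\<^sup>L mu ?l"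
    using integral_count_ramp_bounds(1)[OF mu k, of 1 "1+\<epsilon>"] e
      measure_exceed_set_scale[OF mu, of "1+\<epsilon>" k] unfolding G_def by simp
  have P_l: "integral\<^sup>L M (\<lambda>\<omega>. ?l (Z t \<omega>)) \<le> P t" for t
    using prob_exceed_set_bounds(2)[OF prob Zt[of t], of 1 "1+\<epsilon>" k] e unfolding P_def by simp
  have lower: "\<forall>\<^sub>F t in at_top. G/(1+\<epsilon>) - \<epsilon> \<le> t * P t"
    using ev_l eventually_ge_at_top[of 0]
  proof eventually_elim
    case (elim t)
    then show ?case using mult_left_mono[OF P_l[of t], of t] int_l by linarith
  qed
  show "(\<forall>\<^sub>F t in at_top. t * P t \<le> G/(1-\<epsilon>) + \<epsilon>) \<and> (\<forall>\<^sub>F t in at_top. G/(1+\<epsilon>) - \<epsilon> \<le> t * P t)"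
    using upper lower by blast
qed

section \<open>Polar coordinates\<close>

definition radial :: "('d::finite \<Rightarrow> ennreal) \<Rightarrow> ennreal" where
  "radial y = (\<Sum>j\<in>UNIV. y j)"

definition angular :: "('d::finite \<Rightarrow> ennreal) \<Rightarrow> ('d \<Rightarrow> real)" where
  "angular y = (\<lambda>j. enn2real (y j / radial y))"

lemma spectral_emeasure:
  assumes mu: "exponent_measure mu" and H: "spectral_measure_of mu H" and B: "B \<in> sets borel"
  shows "emeasure H B = emeasure mu {y::'d::finite \<Rightarrow> ennreal. 1 < radial y \<and> angular y \<in> B}"
  using H B exponent_measure_space[OF mu]
  unfolding spectral_measure_of_def radial_def angular_def by auto

lemma spectral_sets: "spectral_measure_of mu H \<Longrightarrow> sets H = sets borel"
  unfolding spectral_measure_of_def by simp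

lemma spectral_space: "spectral_measure_of mu H \<Longrightarrow> space H = UNIV"
  by (metis spectral_sets sets_eq_imp_space_eq space_borel)

lemma angular_bounds: "0 \<le> angular y j" "angular y j \<le> 1"
proof -
  show "0 \<le> angular y j" unfolding angular_def by simp
  have le: "y j \<le> radial y" unfolding radial_def by (rule member_le_sum) auto
  show "angular y j \<le> 1"
  proof (cases "radial y = top \<or> radial y = 0")
    case True then show ?thesis using le unfolding angular_def by (auto simp: ennreal_divide_top)
  next
    case False
    have "y j / radial y \<le> radial y / radial y" using le by (rule divide_right_mono_ennreal)
    also have "\<dots> = 1" using False by (simp add: divide_eq_1_ennreal)
    finally show ?thesis unfolding angular_def using enn2real_mono[of "y j / radial y" 1] by simp
  qed
qed

lemma radial_measurable[measurable]:
  "radial \<in> borel_measurable (borel :: ('d::finite \<Rightarrow> ennreal) measure)"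
  unfolding radial_def by measurable

lemma angular_measurable[measurable]:
  "angular \<in> borel_measurable (borel :: ('d::finite \<Rightarrow> ennreal) measure)"
proof (rule measurable_coordinatewise_then_product)
  fix j show "(\<lambda>y. angular y j) \<in> borel_measurable (borel :: ('d \<Rightarrow> ennreal) measure)"
    unfolding angular_def by measurable
qed

lemma polar_set_borel:
  "B \<in> sets borel \<Longrightarrow> {y::'d::finite \<Rightarrow> ennreal. c < radial y \<and> angular y \<in> B} \<in> sets borel"
proof -
  assume B: "B \<in> sets borel"
  have "{y::'d \<Rightarrow> ennreal. c < radial y \<and> angular y \<in> B}
      = {y \<in> space borel. c < radial y} \<inter> (angular -` B \<inter> space borel)" by auto
  also have "\<dots> \<in> sets borel" using B by measurable
  finally show ?thesis .
qed

lemma radial_scale: "radial (\<lambda>j. ennreal c * y j) = ennreal c * radial y"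
  unfolding radial_def by (simp add: sum_distrib_left)

lemma angular_scale:
  assumes "0 < c" shows "angular (\<lambda>j. ennreal c * y j) = angular y"
proof -
  have "ennreal c * y j / (ennreal c * radial y) = y j / radial y" for j
    using divide_mult_eq[of "ennreal c" "y j" "radial y"] assms by (simp add: mult.commute)
  then show ?thesis unfolding angular_def radial_scale by simp
qed

lemma spectral_polar_scale:
  assumes mu: "exponent_measure mu" and H: "spectral_measure_of mu H"
    and B: "B \<in> sets borel" and c: "0 < c"
  shows "emeasure mu {y::'d::finite \<Rightarrow> ennreal. ennreal c < radial y \<and> angular y \<in> B}
       = emeasure H B / ennreal c"
proof -
  have "emeasure mu {y::'d \<Rightarrow> ennreal. ennreal c < radial y \<and> angular y \<in> B}
      = emeasure mu {y::'d \<Rightarrow> ennreal. 1 < radial y \<and> angular y \<in> B} / ennreal c"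
  proof (rule exponent_measure_scale[OF mu c polar_set_borel[OF B]])
    fix y :: "'d \<Rightarrow> ennreal"
    show "(ennreal c < radial (\<lambda>j. ennreal c * y j) \<and> angular (\<lambda>j. ennreal c * y j) \<in> B)
        \<longleftrightarrow> (1 < radial y \<and> angular y \<in> B)"
      using ennreal_mult_less_cancel[OF c, of 1 "radial y"] by (simp add: radial_scale angular_scale[OF c])
  qed
  then show ?thesis using spectral_emeasure[OF mu H B] by simp
qed

text \<open>H is finite: its total mass is the mu-measure of a subset of {r \<ge> 1}, which is
  compact and avoids 0.\<close>
lemma spectral_finite_measure:
  assumes mu: "exponent_measure mu" and H: "spectral_measure_of mu (H :: ('d::finite \<Rightarrow> real) measure)"
  shows "finite_measure H"
proof (rule finite_measureI)
  let ?R = "{y::'d \<Rightarrow> ennreal. 1 \<le> radial y}"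
  have closed: "closed ?R" unfolding radial_def
    by (intro closed_Collect_le continuous_on_const continuous_on_sum
        continuous_on_product_coordinates)
  have "emeasure H (space H) = emeasure mu {y::'d \<Rightarrow> ennreal. 1 < radial y \<and> angular y \<in> UNIV}"
    using spectral_emeasure[OF mu H, of UNIV] spectral_space[OF H] by simp
  also have "\<dots> \<le> emeasure mu ?R"
    using closed borel_closed exponent_measure_sets[OF mu] by (intro emeasure_mono) auto
  also have "\<dots> < \<infinity>"
    using closed_Int_compact[OF closed compact_UNIV_ennreal_fun]
    by (intro exponent_measure_compact_finite[OF mu]) (auto simp: radial_def)
  finally show "emeasure H (space H) \<noteq> \<infinity>" by simp
qed

lemma exceed_set_iff_angular:
  fixes y :: "'d::finite \<Rightarrow> ennreal"
  assumes k: "1 \<le> k" "k \<le> CARD('d)" and fin: "\<forall>j. y j \<noteq> top" and r: "1 < radial y"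
  shows "radial y = ennreal (enn2real (radial y))" "1 < enn2real (radial y)"
    "y \<in> exceed_set k 1 \<longleftrightarrow> 1 / enn2real (radial y) < kth_largest k (angular y)"
proof -
  have "radial y \<noteq> top" unfolding radial_def using fin by simp
  then show R_eq: "radial y = ennreal (enn2real (radial y))" by (simp add: ennreal_enn2real_if)
  define R where "R = enn2real (radial y)"
  have "1 < ennreal (enn2real (radial y))" using r R_eq by simp
  then show R1: "1 < enn2real (radial y)" by simp
  then have R0: "0 < R" unfolding R_def by simp
  have "1 < y j \<longleftrightarrow> 1 / R < angular y j" for j
  proof -
    have yj: "y j = ennreal (enn2real (y j))" using fin by (simp add: ennreal_enn2real_if)
    have "angular y j = enn2real (y j) / R"
    proof -
      have "y j / radial y = ennreal (enn2real (y j) / R)"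
        using R0 by (subst yj, subst R_eq) (simp add: divide_ennreal R_def)
      then show ?thesis unfolding angular_def using R0 by simp
    qed
    moreover have "1 < y j \<longleftrightarrow> 1 < enn2real (y j)" by (subst yj) simp
    ultimately show ?thesis using R0 by (simp add: divide_less_cancel)
  qed
  then have "{j. 1 < y j} = {j. 1 / R < angular y j}" by auto
  then show "y \<in> exceed_set k 1 \<longleftrightarrow> 1 / enn2real (radial y) < kth_largest k (angular y)"
    unfolding exceed_set_def R_def[symmetric] using kth_largest_gt_iff[OF k, of "1/R" "angular y"]
    by simp
qed

lemma exceed_set_radial_gt:
  assumes "1 \<le> k" "y \<in> exceed_set k 1"
  shows "1 < radial (y :: 'd::finite \<Rightarrow> ennreal)"
proof -
  have "{j. 1 < y j} \<noteq> {}"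
  proof
    assume "{j. 1 < y j} = {}"
    then show False using assms unfolding exceed_set_def by simp
  qed
  then obtain j where "1 < y j" by blast
  moreover have "y j \<le> radial y" unfolding radial_def by (rule member_le_sum) auto
  ultimately show ?thesis by simp
qed

section \<open>Layers of the simplex\<close>

definition in_layer :: "nat \<Rightarrow> nat \<Rightarrow> real \<Rightarrow> bool" where
  "in_layer n i x \<longleftrightarrow> real i / real n < x \<and> x \<le> (real i + 1) / real n"

lemma in_layer_unique: assumes "0 < n" "in_layer n i x" "in_layer n j x" shows "i = j"
proof -
  have "real i / n < (real j + 1) / n" "real j / n < (real i + 1) / n"
    using assms unfolding in_layer_def by auto
  then have "real i < real j + 1" "real j < real i + 1"
    using assms(1) by (simp_all add: divide_less_cancel)
  then show ?thesis by linarith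
qed

lemma in_layer_exists:
  assumes n: "0 < n" and x: "0 < x" "x \<le> 1" shows "\<exists>i<n. in_layer n i x"
proof -
  define m where "m = \<lceil>real n * x\<rceil>"
  have m1: "1 \<le> m" unfolding m_def using n x by simp
  have mn: "m \<le> n" unfolding m_def using n x
    by (metis ceiling_mono ceiling_of_nat mult_left_le of_nat_0_le_iff)
  define i where "i = nat (m - 1)"
  have i: "real i = real_of_int m - 1" unfolding i_def using m1 by simp
  have "real_of_int m - 1 < real n * x" "real n * x \<le> real_of_int m" unfolding m_def
    by (simp_all add: ceiling_correct le_of_int_ceiling)
  then have "real i / n < x" "x \<le> (real i + 1) / n" using n i by (simp_all add: field_simps)
  moreover have "i < n" unfolding i_def using mn m1 by linarith
  ultimately show ?thesis unfolding in_layer_def by blast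
qed

lemma in_layer_range:
  assumes "0 < n" "i < n" "in_layer n i x" shows "0 < x \<and> x \<le> 1"
proof -
  have "0 \<le> real i / real n" "(real i + 1) / real n \<le> 1" using assms(1,2) by simp_all
  then show ?thesis using assms(3) unfolding in_layer_def by linarith
qed

lemma in_layer_sum_one:
  assumes "0 < n" "0 < x" "x \<le> 1"
  shows "(\<Sum>i<n. (if in_layer n i x then 1 else 0 :: ennreal)) = 1"
proof -
  obtain i where i: "i < n" "in_layer n i x" using in_layer_exists[OF assms] by blast
  have "(if in_layer n j x then 1 else 0 :: ennreal) = (if j = i then 1 else 0)" for j
    using in_layer_unique[OF assms(1) i(2), of j] i(2) by (cases "in_layer n j x") auto
  then have "(\<Sum>j<n. (if in_layer n j x then 1 else 0 :: ennreal)) = (\<Sum>j<n. (if j = i then 1 else 0))"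
    by simp
  also have "\<dots> = 1" using i(1) by (subst sum.delta) auto
  finally show ?thesis .
qed

lemma in_layer_sum_le_one:
  assumes "0 < n"
  shows "(\<Sum>i<n. (if in_layer n i x then 1 else 0 :: ennreal)) \<le> 1"
proof (cases "0 < x \<and> x \<le> 1")
  case False
  then have "\<forall>i\<in>{..<n}. \<not> in_layer n i x" using in_layer_range[OF assms] by auto
  then show ?thesis by simp
qed (use in_layer_sum_one[OF assms] in auto)

lemma div_ennreal_const: "0 < c \<Longrightarrow> x / ennreal c = ennreal (1/c) * x"
  by (simp add: divide_ennreal_def inverse_ennreal inverse_eq_divide mult.commute)

text \<open>A quantity below the upper layer sums is below anything above the lower layer sums,
  provided the layer masses are bounded: the two sums differ by at most C/n.\<close>
lemma ennreal_le_by_layer_sums: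
  fixes h :: "nat \<Rightarrow> nat \<Rightarrow> ennreal" and X Y :: ennreal and C :: real
  assumes total: "\<And>n. 0 < n \<Longrightarrow> (\<Sum>i<n. h n i) \<le> ennreal C"
    and X: "\<And>n. 0 < n \<Longrightarrow> X \<le> (\<Sum>i<n. ennreal ((real i + 1) / n) * h n i)"
    and Y: "\<And>n. 0 < n \<Longrightarrow> (\<Sum>i<n. ennreal (real i / n) * h n i) \<le> Y"
  shows "X \<le> Y"
proof (rule ennreal_le_epsilon)
  fix e :: real assume e: "0 < e"
  obtain n :: nat where n: "max 1 (C / e) < n" using reals_Archimedean2 by blast
  then have n0: "0 < n" by simp
  have "C < n * e" using n e by (simp add: divide_less_eq)
  then have gap: "C / n \<le> e" using n0 by (simp add: divide_le_eq mult.commute)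
  have "ennreal ((real i + 1) / n) = ennreal (real i / n) + ennreal (1 / n)" for i
    by (simp add: add_divide_distrib)
  then have "(\<Sum>i<n. ennreal ((real i + 1) / n) * h n i)
      = (\<Sum>i<n. ennreal (real i / n) * h n i) + ennreal (1 / n) * (\<Sum>i<n. h n i)"
    by (simp add: distrib_right sum.distrib sum_distrib_left)
  also have "\<dots> \<le> Y + ennreal (1 / n) * ennreal C"
    using Y[OF n0] total[OF n0] by (intro add_mono mult_left_mono) auto
  also have "ennreal (1 / n) * ennreal C = ennreal (C / n)"
    by (simp flip: ennreal_mult')
  also have "Y + ennreal (C / n) \<le> Y + ennreal e"
    using gap by (intro add_left_mono ennreal_leI)
  finally show "X \<le> Y + ennreal e" using X[OF n0] by (rule order_trans[rotated])
qed

section \<open>The spectral identity\<close>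

definition angle_layer :: "nat \<Rightarrow> nat \<Rightarrow> nat \<Rightarrow> ('d::finite \<Rightarrow> real) set" where
  "angle_layer k n i = {w. in_layer n i (kth_largest k w)}"

context
  fixes mu :: "('d::finite \<Rightarrow> ennreal) measure" and H :: "('d \<Rightarrow> real) measure" and k :: nat
  assumes mu: "exponent_measure mu" and H: "spectral_measure_of mu H"
    and k: "1 \<le> k" "k \<le> CARD('d)"
begin

lemma kth_largest_measurable[measurable]:
  "kth_largest k \<in> borel_measurable (borel :: ('d \<Rightarrow> real) measure)"
  by (rule ord_stat_measurable) (use k in auto)

lemma kth_largest_measurable_H[measurable]: "kth_largest k \<in> borel_measurable H"
  using kth_largest_measurable spectral_sets[OF H] by (simp cong: measurable_cong_sets)

lemma angle_layer_borel: "angle_layer k n i \<in> sets (borel :: ('d \<Rightarrow> real) measure)"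
  unfolding angle_layer_def in_layer_def by measurable

lemma angle_layer_sets_H[measurable]: "angle_layer k n i \<in> sets H"
  using angle_layer_borel spectral_sets[OF H] by simp

lemma kth_largest_angular_bounds:
  "0 \<le> kth_largest k (angular (y::'d \<Rightarrow> ennreal))" "kth_largest k (angular y) \<le> 1"
  using kth_largest_unit_bounds[OF k, of "angular y"] angular_bounds[of y] by auto

text \<open>H is concentrated on angles, so the k-th largest coordinate is H-a.e. in [0,1].\<close>
lemma kth_largest_AE_bounds: "AE w in H. 0 \<le> kth_largest k w \<and> kth_largest k w \<le> 1"
proof (rule AE_I')
  let ?N = "{w::'d \<Rightarrow> real. \<not> (0 \<le> kth_largest k w \<and> kth_largest k w \<le> 1)}"
  have N: "?N \<in> sets borel" by measurable
  have "emeasure H ?N = emeasure mu {y. 1 < radial y \<and> angular y \<in> ?N}"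
    by (rule spectral_emeasure[OF mu H N])
  also have "{y. 1 < radial y \<and> angular y \<in> ?N} = {}"
    using kth_largest_angular_bounds by auto
  finally have "emeasure H ?N = 0" by simp
  then show "?N \<in> null_sets H" using N spectral_sets[OF H] by (simp add: null_sets_def)
qed auto

lemma kth_largest_angular_measurable:
  "(\<lambda>y. kth_largest k (angular y)) \<in> borel_measurable (borel :: ('d \<Rightarrow> ennreal) measure)"
  using kth_largest_measurable angular_measurable by (rule measurable_compose[rotated])

lemma exceed_layer_sets: "{y \<in> exceed_set k 1. angular y \<in> angle_layer k n i} \<in> sets mu"
proof -
  have "{y \<in> exceed_set k 1. angular y \<in> angle_layer k n i}
      = exceed_set k 1 \<inter> {y \<in> space borel. in_layer n i (kth_largest k (angular (y::'d \<Rightarrow> ennreal)))}"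
    by (auto simp: angle_layer_def)
  also have "\<dots> \<in> sets borel"
    using exceed_set_borel kth_largest_angular_measurable unfolding in_layer_def by measurable
  finally show ?thesis using exponent_measure_sets[OF mu] by simp
qed

lemma exceed_angular_pos:
  assumes "\<forall>j. y j \<noteq> top" "y \<in> exceed_set k 1"
  shows "0 < kth_largest k (angular (y::'d \<Rightarrow> ennreal))"
proof -
  have r: "1 < radial y" using exceed_set_radial_gt[OF k(1) assms(2)] .
  have "1 / enn2real (radial y) < kth_largest k (angular y)"
    using exceed_set_iff_angular[OF k assms(1) r] assms(2) by blast
  moreover have "0 < 1 / enn2real (radial y)" using exceed_set_iff_angular(2)[OF k assms(1) r] by simp
  ultimately show ?thesis by linarith
qed

text \<open>Up to the null set of points with an infinite coordinate, the exceedance set is the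
  disjoint union of its parts over the angle layers.\<close>
lemma exceed_layer_decomp:
  assumes n: "0 < n"
  shows "emeasure mu (exceed_set k 1)
       = (\<Sum>i<n. emeasure mu {y \<in> exceed_set k 1. angular y \<in> angle_layer k n i})"
proof -
  let ?A = "\<lambda>i. {y \<in> exceed_set k 1. angular y \<in> angle_layer k n i}"
  have "AE y in mu. indicator (exceed_set k 1) y = (\<Sum>i<n. indicator (?A i) y :: ennreal)"
  proof (rule AE_I'[OF exponent_measure_infinite_null[OF mu]], safe)
    fix y :: "'d \<Rightarrow> ennreal"
    assume ne: "indicator (exceed_set k 1) y \<noteq> (\<Sum>i<n. indicator (?A i) y :: ennreal)"
    have sum_eq: "(\<Sum>i<n. indicator (?A i) y :: ennreal)
        = (\<Sum>i<n. indicator (exceed_set k 1) y * (if in_layer n i (kth_largest k (angular y)) then 1 else 0))"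
      by (intro sum.cong) (auto simp: indicator_def angle_layer_def)
    show "\<exists>j. y j = top"
    proof (rule ccontr)
      assume "\<not> (\<exists>j. y j = top)"
      then have "y \<in> exceed_set k 1"
        using ne sum_eq by (cases "y \<in> exceed_set k 1") auto
      with \<open>\<not> (\<exists>j. y j = top)\<close> show False
        using ne sum_eq in_layer_sum_one[OF n exceed_angular_pos kth_largest_angular_bounds(2)]
        by (simp flip: sum_distrib_left)
    qed
  qed
  then have "emeasure mu (exceed_set k 1) = (\<integral>\<^sup>+ y. (\<Sum>i<n. indicator (?A i) y) \<partial>mu)"
    using exceed_set_borel exponent_measure_sets[OF mu]
    by (subst nn_integral_indicator[symmetric]) (auto intro: nn_integral_cong_AE)
  also have "\<dots> = (\<Sum>i<n. emeasure mu (?A i))"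
    using exceed_layer_sets by (subst nn_integral_sum) auto
  finally show ?thesis .
qed

lemma emeasure_le_up_to_null:
  assumes "A \<subseteq> C \<union> N" "C \<in> sets mu" "N \<in> null_sets mu"
  shows "emeasure mu A \<le> emeasure mu C"
proof -
  have "emeasure mu A \<le> emeasure mu (C \<union> N)"
    using assms by (intro emeasure_mono) (auto simp: exponent_measure_space[OF mu])
  also have "\<dots> \<le> emeasure mu C + emeasure mu N"
    using assms by (intro emeasure_subadditive) auto
  also have "emeasure mu N = 0" using assms(3) by auto
  finally show ?thesis by simp
qed

text \<open>On layer i the k-th largest angular coordinate is at most (i+1)/n, so exceedance forces
  r > n/(i+1); homogeneity then bounds the layer's mass by (i+1)/n times its H-mass.\<close>
lemma exceed_layer_upper:
  assumes n: "0 < n"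
  shows "emeasure mu {y \<in> exceed_set k 1. angular y \<in> angle_layer k n i}
       \<le> ennreal ((real i + 1) / n) * emeasure H (angle_layer k n i)"
proof -
  let ?c = "real n / (real i + 1)"
  have c: "0 < ?c" using n by simp
  have "emeasure mu {y \<in> exceed_set k 1. angular y \<in> angle_layer k n i}
      \<le> emeasure mu {y. ennreal ?c < radial y \<and> angular y \<in> angle_layer k n i}"
  proof (rule emeasure_le_up_to_null[OF _ _ exponent_measure_infinite_null[OF mu]], intro subsetI)
    fix y :: "'d \<Rightarrow> ennreal"
    assume "y \<in> {y \<in> exceed_set k 1. angular y \<in> angle_layer k n i}"
    then have E: "y \<in> exceed_set k 1" and L: "angular y \<in> angle_layer k n i" by auto
    show "y \<in> {y. ennreal ?c < radial y \<and> angular y \<in> angle_layer k n i} \<union> {y. \<exists>j. y j = top}"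
    proof (cases "\<exists>j. y j = top")
      case False
      then have fin: "\<forall>j. y j \<noteq> top" by simp
    have r: "1 < radial y" using exceed_set_radial_gt[OF k(1) E] .
    define R where "R = enn2real (radial y)"
    have R: "radial y = ennreal R" "1 < R"
      using exceed_set_iff_angular[OF k fin r] unfolding R_def by auto
    have "1 / R < kth_largest k (angular y)"
      using exceed_set_iff_angular(3)[OF k fin r] E unfolding R_def by blast
    also have "\<dots> \<le> (real i + 1) / n" using L unfolding angle_layer_def in_layer_def by simp
    finally have "?c < R" using R n by (simp add: field_simps)
    then show ?thesis using R c L by (simp add: ennreal_less_iff)
    qed simp
  qed (use polar_set_borel[OF angle_layer_borel] exponent_measure_sets[OF mu] in auto)
  also have "\<dots> = emeasure H (angle_layer k n i) / ennreal ?c"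
    by (rule spectral_polar_scale[OF mu H angle_layer_borel c])
  also have "\<dots> = ennreal ((real i + 1) / n) * emeasure H (angle_layer k n i)"
    using c by (simp add: div_ennreal_const)
  finally show ?thesis .
qed

text \<open>Conversely, on layer i every point with r > n/i exceeds: a lower bound i/n.\<close>
lemma exceed_layer_lower:
  assumes n: "0 < n" and i: "i < n"
  shows "ennreal (real i / n) * emeasure H (angle_layer k n i)
       \<le> emeasure mu {y \<in> exceed_set k 1. angular y \<in> angle_layer k n i}"
proof (cases "i = 0")
  case False
  then have i0: "0 < i" by simp
  let ?c = "real n / real i"
  have c: "0 < ?c" and c1: "1 \<le> ?c" using n i i0 by auto
  have "ennreal (real i / n) * emeasure H (angle_layer k n i)
      = emeasure mu {y. ennreal ?c < radial y \<and> angular y \<in> angle_layer k n i}"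
    using spectral_polar_scale[OF mu H angle_layer_borel c] c by (simp add: div_ennreal_const)
  also have "\<dots> \<le> emeasure mu {y \<in> exceed_set k 1. angular y \<in> angle_layer k n i}"
  proof (rule emeasure_le_up_to_null[OF _ exceed_layer_sets exponent_measure_infinite_null[OF mu]],
         intro subsetI)
    fix y :: "'d \<Rightarrow> ennreal"
    assume "y \<in> {y. ennreal ?c < radial y \<and> angular y \<in> angle_layer k n i}"
    then have rc: "ennreal ?c < radial y" and L: "angular y \<in> angle_layer k n i" by auto
    show "y \<in> {y \<in> exceed_set k 1. angular y \<in> angle_layer k n i} \<union> {y. \<exists>j. y j = top}"
    proof (cases "\<exists>j. y j = top")
      case False
      then have fin: "\<forall>j. y j \<noteq> top" by simp
    have r: "1 < radial y" using rc c1 by (metis ennreal_1 ennreal_leI le_less_trans)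
    define R where "R = enn2real (radial y)"
    have R: "radial y = ennreal R" "1 < R"
      using exceed_set_iff_angular[OF k fin r] unfolding R_def by auto
    have "?c < R" using rc R by (simp add: ennreal_less_iff)
    then have "1 / R < real i / n" using n i0 R by (simp add: field_simps)
    also have "\<dots> < kth_largest k (angular y)"
      using L unfolding angle_layer_def in_layer_def by simp
    finally have "y \<in> exceed_set k 1"
      using exceed_set_iff_angular(3)[OF k fin r] unfolding R_def by blast
    then show ?thesis using L by simp
    qed simp
  qed
  finally show ?thesis .
qed simp

lemma integral_layer_decomp:
  assumes n: "0 < n"
  shows "(\<integral>\<^sup>+ w. ennreal (kth_largest k w) \<partial>H)
       = (\<Sum>i<n. \<integral>\<^sup>+ w. ennreal (kth_largest k w) * indicator (angle_layer k n i) w \<partial>H)"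
proof -
  have "AE w in H. ennreal (kth_largest k w)
      = (\<Sum>i<n. ennreal (kth_largest k w) * indicator (angle_layer k n i) w)"
    using kth_largest_AE_bounds
  proof eventually_elim
    case (elim w)
    show ?case
    proof (cases "kth_largest k w = 0")
      case False
      have "(\<Sum>i<n. ennreal (kth_largest k w) * indicator (angle_layer k n i) w)
          = (\<Sum>i<n. ennreal (kth_largest k w) * (if in_layer n i (kth_largest k w) then 1 else 0))"
        by (intro sum.cong) (auto simp: indicator_def angle_layer_def)
      also have "\<dots> = ennreal (kth_largest k w)
          * (\<Sum>i<n. (if in_layer n i (kth_largest k w) then 1 else 0))"
        by (rule sum_distrib_left[symmetric])
      also have "(\<Sum>i<n. (if in_layer n i (kth_largest k w) then 1 else 0 :: ennreal)) = 1"
        using elim False by (intro in_layer_sum_one[OF n]) auto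
      finally show ?thesis by simp
    qed simp
  qed
  then have "(\<integral>\<^sup>+ w. ennreal (kth_largest k w) \<partial>H)
      = (\<integral>\<^sup>+ w. (\<Sum>i<n. ennreal (kth_largest k w) * indicator (angle_layer k n i) w) \<partial>H)"
    by (rule nn_integral_cong_AE)
  also have "\<dots> = (\<Sum>i<n. \<integral>\<^sup>+ w. ennreal (kth_largest k w) * indicator (angle_layer k n i) w \<partial>H)"
    by (intro nn_integral_sum) measurable
  finally show ?thesis .
qed

lemma integral_layer_bounds:
  "ennreal (real i / n) * emeasure H (angle_layer k n i)
     \<le> (\<integral>\<^sup>+ w. ennreal (kth_largest k w) * indicator (angle_layer k n i) w \<partial>H)"
  "(\<integral>\<^sup>+ w. ennreal (kth_largest k w) * indicator (angle_layer k n i) w \<partial>H)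
     \<le> ennreal ((real i + 1) / n) * emeasure H (angle_layer k n i)"
proof -
  show "ennreal (real i / n) * emeasure H (angle_layer k n i)
     \<le> (\<integral>\<^sup>+ w. ennreal (kth_largest k w) * indicator (angle_layer k n i) w \<partial>H)"
    unfolding nn_integral_cmult_indicator[OF angle_layer_sets_H, symmetric]
    by (intro nn_integral_mono) (auto simp: indicator_def angle_layer_def in_layer_def ennreal_leI)
  show "(\<integral>\<^sup>+ w. ennreal (kth_largest k w) * indicator (angle_layer k n i) w \<partial>H)
     \<le> ennreal ((real i + 1) / n) * emeasure H (angle_layer k n i)"
    unfolding nn_integral_cmult_indicator[OF angle_layer_sets_H, symmetric]
    by (intro nn_integral_mono) (auto simp: indicator_def angle_layer_def in_layer_def ennreal_leI)
qed

lemma layers_total_mass: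
  assumes n: "0 < n"
  shows "(\<Sum>i<n. emeasure H (angle_layer k n i)) \<le> ennreal (measure H UNIV)"
proof -
  have "(\<Sum>i<n. emeasure H (angle_layer k n i)) = (\<integral>\<^sup>+ w. (\<Sum>i<n. indicator (angle_layer k n i) w) \<partial>H)"
    by (simp add: nn_integral_sum)
  also have "\<dots> \<le> (\<integral>\<^sup>+ w. 1 \<partial>H)"
    using in_layer_sum_le_one[OF n]
    by (intro nn_integral_mono) (simp add: indicator_def angle_layer_def of_bool_def)
  also have "\<dots> = ennreal (measure H UNIV)"
    using finite_measure.emeasure_eq_measure[OF spectral_finite_measure[OF mu H]]
      spectral_space[OF H] by simp
  finally show ?thesis .
qed

text \<open>Part (2) of the proof: both sides lie between the lower and upper layer sums.\<close>
theorem exceed_set_spectral_identity: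
  "measure mu (exceed_set k 1) = integral\<^sup>L H (kth_largest k)"
proof -
  let ?h = "\<lambda>n i. emeasure H (angle_layer k n i)"
  let ?I = "\<integral>\<^sup>+ w. ennreal (kth_largest k w) \<partial>H"
  have lower: "(\<Sum>i<n. ennreal (real i / n) * ?h n i) \<le> emeasure mu (exceed_set k 1)"
    and upper: "emeasure mu (exceed_set k 1) \<le> (\<Sum>i<n. ennreal ((real i + 1) / n) * ?h n i)"
    if n: "0 < n" for n
    unfolding exceed_layer_decomp[OF n]
    using exceed_layer_lower[OF n] exceed_layer_upper[OF n] by (auto intro!: sum_mono)
  have lower': "(\<Sum>i<n. ennreal (real i / n) * ?h n i) \<le> ?I"
    and upper': "?I \<le> (\<Sum>i<n. ennreal ((real i + 1) / n) * ?h n i)"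
    if n: "0 < n" for n
    unfolding integral_layer_decomp[OF n]
    using integral_layer_bounds by (auto intro!: sum_mono)
  have "emeasure mu (exceed_set k 1) = ?I"
    using ennreal_le_by_layer_sums[OF layers_total_mass upper lower']
      ennreal_le_by_layer_sums[OF layers_total_mass upper' lower]
    by (rule order.antisym)
  moreover have "integral\<^sup>L H (kth_largest k) = enn2real ?I"
    using kth_largest_AE_bounds kth_largest_measurable_H
    by (intro integral_eq_nn_integral) (auto elim: eventually_mono)
  ultimately show ?thesis by (simp add: measure_def)
qed

end

section \<open>Limits for the number of exceedances\<close>

theorem exceedance_count_limit:
  fixes M :: "'a measure" and Z :: "real \<Rightarrow> 'a \<Rightarrow> 'd::finite \<Rightarrow> ennreal"
  assumes prob: "prob_space M"
    and Z: "\<And>t j. (\<lambda>\<omega>. Z t \<omega> j) \<in> borel_measurable M"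
    and mu: "exponent_measure mu" and H: "spectral_measure_of mu H"
    and v: "vague_conv_E (\<lambda>t f. t * integral\<^sup>L M (\<lambda>\<omega>. f (Z t \<omega>))) mu"
    and k: "1 \<le> k" "k \<le> CARD('d)"
  shows "((\<lambda>t. t * measure M {\<omega> \<in> space M. k \<le> card {j. 1 < Z t \<omega> j}})
           \<longlongrightarrow> integral\<^sup>L H (kth_largest k)) at_top"
  using exceedance_prob_limit[OF prob Z mu v k(1)] exceed_set_spectral_identity[OF mu H k]
  by (simp add: exceed_set_def)

lemma kth_largest_integrable:
  assumes mu: "exponent_measure mu" and H: "spectral_measure_of mu H"
    and k: "1 \<le> k" "k \<le> CARD('d)"
  shows "integrable H (kth_largest k :: ('d::finite \<Rightarrow> real) \<Rightarrow> real)"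
  using kth_largest_AE_bounds[OF mu H k] kth_largest_measurable_H[OF mu H k]
  by (intro finite_measure.integrable_const_bound[OF spectral_finite_measure[OF mu H], where B=1])
    (auto elim: eventually_mono)

lemma sum_integral_kth_largest:
  assumes mu: "exponent_measure mu" and H: "spectral_measure_of mu H" and k: "k < CARD('d)"
  shows "(\<Sum>m\<in>{k+1..CARD('d)}. integral\<^sup>L H (kth_largest m))
       = integral\<^sup>L H (\<lambda>w::'d::finite \<Rightarrow> real. \<Sum>i=1..CARD('d) - k. ord_stat w i)"
proof -
  have "(\<Sum>m\<in>{k+1..CARD('d)}. integral\<^sup>L H (kth_largest m))
      = (\<Sum>i=1..CARD('d) - k. integral\<^sup>L H (\<lambda>w::'d \<Rightarrow> real. ord_stat w i))"
    by (rule sum.reindex_bij_witness[where i="\<lambda>i. CARD('d) - i + 1" and j="\<lambda>m. CARD('d) - m + 1"])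
      (use k in auto)
  also have "\<dots> = integral\<^sup>L H (\<lambda>w. \<Sum>i=1..CARD('d) - k. ord_stat w i)"
  proof (rule Bochner_Integration.integral_sum[symmetric])
    fix i assume i: "i \<in> {1..CARD('d) - k}"
    then have "CARD('d) - (CARD('d) - i + 1) + 1 = i" by auto
    then show "integrable H (\<lambda>w::'d \<Rightarrow> real. ord_stat w i)"
      using kth_largest_integrable[OF mu H, of "CARD('d) - i + 1"] i by auto
  qed
  finally show ?thesis .
qed

lemma excess_eq_sum_indicators:
  assumes "n \<le> d"
  shows "(real n - real k) * (if k \<le> n then 1 else 0)
       = (\<Sum>m\<in>{k+1..d}. (if m \<le> n then 1 else 0 :: real))"
proof -
  have "(\<Sum>m\<in>{k+1..d}. (if m \<le> n then 1 else 0 :: real)) = real (card {m\<in>{k+1..d}. m \<le> n})"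
    by (simp add: sum.If_cases Int_def)
  also have "{m\<in>{k+1..d}. m \<le> n} = {k+1..n}" using assms by auto
  finally show ?thesis by (cases "k \<le> n") auto
qed

lemma expected_excess_eq_tail_sum:
  fixes N :: "'a \<Rightarrow> nat"
  assumes "prob_space M" and N_le: "\<And>\<omega>. N \<omega> \<le> d"
    and N_sets: "\<And>m. {\<omega> \<in> space M. m \<le> N \<omega>} \<in> sets M"
  shows "integral\<^sup>L M (\<lambda>\<omega>. (real (N \<omega>) - real k) * indicator {\<omega>. N \<omega> \<ge> k} \<omega>)
       = (\<Sum>m\<in>{k+1..d}. measure M {\<omega> \<in> space M. m \<le> N \<omega>})"
proof -
  interpret prob_space M by fact
  have "integral\<^sup>L M (\<lambda>\<omega>. (real (N \<omega>) - real k) * indicator {\<omega>. N \<omega> \<ge> k} \<omega>)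
      = integral\<^sup>L M (\<lambda>\<omega>. \<Sum>m\<in>{k+1..d}. indicator {\<omega> \<in> space M. m \<le> N \<omega>} \<omega>)"
  proof (rule Bochner_Integration.integral_cong[OF refl])
    fix \<omega> assume \<omega>: "\<omega> \<in> space M"
    have "(\<Sum>m\<in>{k+1..d}. indicator {\<omega> \<in> space M. m \<le> N \<omega>} \<omega>)
        = (\<Sum>m\<in>{k+1..d}. if m \<le> N \<omega> then 1 else 0 :: real)"
      using \<omega> by (intro sum.cong) (auto simp: indicator_def)
    moreover have "indicator {\<omega>. N \<omega> \<ge> k} \<omega> = (if k \<le> N \<omega> then 1 else (0::real))"
      by (simp add: indicator_def)
    ultimately show "(real (N \<omega>) - real k) * indicator {\<omega>. N \<omega> \<ge> k} \<omega>
        = (\<Sum>m\<in>{k+1..d}. indicator {\<omega> \<in> space M. m \<le> N \<omega>} \<omega>)"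
      using excess_eq_sum_indicators[OF N_le[of \<omega>], of k] by (simp only:)
  qed
  also have "\<dots> = (\<Sum>m\<in>{k+1..d}. measure M {\<omega> \<in> space M. m \<le> N \<omega>})"
    using N_sets
    by (subst Bochner_Integration.integral_sum)
      (auto simp: Int_absorb2 sets.sets_into_space less_top[symmetric])
  finally show ?thesis .
qed

lemma conditional_excess_limit:
  fixes N :: "real \<Rightarrow> 'a \<Rightarrow> nat"
  assumes prob: "prob_space M" and N_le: "\<And>t \<omega>. N t \<omega> \<le> d"
    and N_sets: "\<And>t m. {\<omega> \<in> space M. m \<le> N t \<omega>} \<in> sets M"
    and lim: "\<And>m. k \<le> m \<Longrightarrow> m \<le> d \<Longrightarrow>
                 ((\<lambda>t. t * measure M {\<omega> \<in> space M. m \<le> N t \<omega>}) \<longlongrightarrow> L m) at_top"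
    and k: "k \<le> d" and pos: "0 < L k"
  shows "((\<lambda>t. integral\<^sup>L M (\<lambda>\<omega>. (real (N t \<omega>) - real k) * indicator {\<omega>. N t \<omega> \<ge> k} \<omega>)
                / measure M {\<omega> \<in> space M. N t \<omega> \<ge> k})
           \<longlongrightarrow> (\<Sum>m\<in>{k+1..d}. L m) / L k) at_top"
proof -
  let ?P = "\<lambda>t m. measure M {\<omega> \<in> space M. m \<le> N t \<omega>}"
  have "((\<lambda>t. (\<Sum>m\<in>{k+1..d}. t * ?P t m) / (t * ?P t k)) \<longlongrightarrow> (\<Sum>m\<in>{k+1..d}. L m) / L k) at_top"
    using pos k by (intro tendsto_divide tendsto_sum lim) auto
  moreover have "\<forall>\<^sub>F t in at_top. (\<Sum>m\<in>{k+1..d}. t * ?P t m) / (t * ?P t k)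
      = integral\<^sup>L M (\<lambda>\<omega>. (real (N t \<omega>) - real k) * indicator {\<omega>. N t \<omega> \<ge> k} \<omega>) / ?P t k"
    using eventually_gt_at_top[of 0]
    by eventually_elim
      (simp add: expected_excess_eq_tail_sum[OF prob N_le N_sets] sum_distrib_left[symmetric])
  ultimately show ?thesis by (rule Lim_transform_eventually)
qed

lemma spectral_conditional_excess_limit:
  fixes N :: "real \<Rightarrow> 'a \<Rightarrow> nat" and H :: "('d::finite \<Rightarrow> real) measure"
  assumes prob: "prob_space M" and mu: "exponent_measure mu" and H: "spectral_measure_of mu H"
    and N_le: "\<And>t \<omega>. N t \<omega> \<le> CARD('d)"
    and N_sets: "\<And>t m. {\<omega> \<in> space M. m \<le> N t \<omega>} \<in> sets M"
    and tail: "\<And>m. 1 \<le> m \<Longrightarrow> m \<le> CARD('d) \<Longrightarrow>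
      ((\<lambda>t. t * measure M {\<omega> \<in> space M. m \<le> N t \<omega>}) \<longlongrightarrow> integral\<^sup>L H (kth_largest m)) at_top"
    and k: "1 \<le> k" "k < CARD('d)" and pos: "0 < integral\<^sup>L H (kth_largest k)"
  shows "((\<lambda>t. integral\<^sup>L M (\<lambda>\<omega>. (real (N t \<omega>) - real k) * indicator {\<omega>. N t \<omega> \<ge> k} \<omega>)
                / measure M {\<omega> \<in> space M. N t \<omega> \<ge> k})
           \<longlongrightarrow> integral\<^sup>L H (\<lambda>w. \<Sum>i=1..CARD('d) - k. ord_stat w i)
               / integral\<^sup>L H (kth_largest k)) at_top"
proof -
  have "((\<lambda>t. integral\<^sup>L M (\<lambda>\<omega>. (real (N t \<omega>) - real k) * indicator {\<omega>. N t \<omega> \<ge> k} \<omega>)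
                / measure M {\<omega> \<in> space M. N t \<omega> \<ge> k})
      \<longlongrightarrow> (\<Sum>m\<in>{k+1..CARD('d)}. integral\<^sup>L H (kth_largest m)) / integral\<^sup>L H (kth_largest k))
      at_top"
    using k pos
    by (intro conditional_excess_limit[OF prob N_le N_sets, where L="\<lambda>m. integral\<^sup>L H (kth_largest m)"]
        tail) auto
  then show ?thesis using sum_integral_kth_largest[OF mu H k(2)] by simp
qed

lemma standardised_gt_one_iff:
  assumes "0 \<le> p" "p \<le> 1" "0 < t"
  shows "1 < 1 / ennreal (1 - p) / ennreal t \<longleftrightarrow> 1 - 1/t < p"
proof (cases "p = 1")
  case True
  then show ?thesis using assms by (simp add: ennreal_divide_top divide_ennreal_def)
next
  case False
  then have q: "0 < 1 - p" using assms by simp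
  have "1 / ennreal (1 - p) = ennreal (1 / (1 - p))" using divide_ennreal[of 1 "1-p"] q by simp
  then have "1 / ennreal (1 - p) / ennreal t = ennreal (1 / (1 - p) / t)"
    using divide_ennreal[of "1/(1-p)" t] q assms by simp
  moreover have "1 < 1 / (1 - p) / t \<longleftrightarrow> 1 - 1/t < p"
    using q assms by (simp add: field_simps)
  ultimately show ?thesis by simp
qed

lemma standardised_count:
  fixes X :: "'a \<Rightarrow> 'd::finite \<Rightarrow> real" and F :: "'d \<Rightarrow> real \<Rightarrow> real"
  assumes N_def: "N = (\<lambda>t \<omega>. \<Sum>j\<in>UNIV. (if F j (X \<omega> j) > 1 - 1 / t then 1 else 0 :: nat))"
    and prob: "prob_space M"
    and rv: "\<And>j. (\<lambda>\<omega>. X \<omega> j) \<in> borel_measurable M"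
    and F_def: "\<And>j x. F j x = measure M {\<omega> \<in> space M. X \<omega> j \<le> x}"
    and F_cont: "\<And>j. continuous_on UNIV (F j)"
  shows "\<And>t j. (\<lambda>\<omega>. 1 / ennreal (1 - F j (X \<omega> j)) / ennreal t) \<in> borel_measurable M"
    and "\<And>t \<omega>. 0 < t \<Longrightarrow> N t \<omega> = card {j. 1 < 1 / ennreal (1 - F j (X \<omega> j)) / ennreal t}"
    and "\<And>t \<omega>. N t \<omega> \<le> CARD('d)"
    and "\<And>t m. {\<omega> \<in> space M. m \<le> N t \<omega>} \<in> sets M"
proof -
  interpret prob_space M by (rule prob)
  have F_measurable [measurable]: "F j \<in> borel_measurable borel" for j
    using F_cont by (rule borel_measurable_continuous_onI)
  note rv [measurable]
  show "(\<lambda>\<omega>. 1 / ennreal (1 - F j (X \<omega> j)) / ennreal t) \<in> borel_measurable M" for t j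
    by measurable
  have N_card: "N t \<omega> = card {j. 1 - 1 / t < F j (X \<omega> j)}" for t \<omega>
    unfolding N_def by (simp add: sum.If_cases)
  show "N t \<omega> = card {j. 1 < 1 / ennreal (1 - F j (X \<omega> j)) / ennreal t}" if "0 < t" for t \<omega>
    using standardised_gt_one_iff[OF _ _ that] F_def prob_le_1 unfolding N_card by simp
  show "N t \<omega> \<le> CARD('d)" for t \<omega>
    unfolding N_card by (rule card_mono) auto
  show "{\<omega> \<in> space M. m \<le> N t \<omega>} \<in> sets M" for m t
    using measurable_card_ge[where M=M and P="\<lambda>j \<omega>. 1 - 1 / t < F j (X \<omega> j)" and k=m]
    unfolding N_card by (simp add: pred_def)
qed

theorem mainTheorem6:
  fixes M :: "'a measure" and X :: "'a \<Rightarrow> 'd::finite \<Rightarrow> real"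
    and F :: "'d \<Rightarrow> real \<Rightarrow> real"
    and mu :: "('d \<Rightarrow> ennreal) measure" and H :: "('d \<Rightarrow> real) measure"
  defines "Y \<equiv> (\<lambda>\<omega> j. 1 / ennreal (1 - F j (X \<omega> j)))"
    and "N \<equiv> (\<lambda>t \<omega>. \<Sum>j\<in>UNIV. (if F j (X \<omega> j) > 1 - 1 / t then 1 else 0 :: nat))"
  assumes prob: "prob_space M"
    and rv: "\<And>j. (\<lambda>\<omega>. X \<omega> j) \<in> borel_measurable M"
    and F_def: "\<And>j x. F j x = measure M {\<omega> \<in> space M. X \<omega> j \<le> x}"
    and F_cont: "\<And>j. continuous_on UNIV (F j)"
    and mu: "exponent_measure mu"
    and vague: "vague_conv_E
                  (\<lambda>t f. t * integral\<^sup>L M (\<lambda>\<omega>. f (\<lambda>j. Y \<omega> j / ennreal t))) mu"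
    and H: "spectral_measure_of mu H"
  shows "(\<forall>k\<in>{1..CARD('d)}.
            ((\<lambda>t. t * measure M {\<omega> \<in> space M. N t \<omega> \<ge> k})
               \<longlongrightarrow> integral\<^sup>L H (\<lambda>w. ord_stat w (CARD('d) - k + 1))) at_top)
       \<and> ((\<lambda>t. t * measure M {\<omega> \<in> space M. N t \<omega> \<ge> 1})
               \<longlongrightarrow> integral\<^sup>L H (\<lambda>w. Max (range w))) at_top
       \<and> ((\<lambda>t. t * measure M {\<omega> \<in> space M. N t \<omega> = CARD('d)})
               \<longlongrightarrow> integral\<^sup>L H (\<lambda>w. Min (range w))) at_top
       \<and> (\<forall>k\<in>{1..<CARD('d)}.
            integral\<^sup>L H (\<lambda>w. ord_stat w (CARD('d) - k + 1)) > 0 \<longrightarrow>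
            ((\<lambda>t. integral\<^sup>L M (\<lambda>\<omega>. (real (N t \<omega>) - real k)
                      * indicator {\<omega>. N t \<omega> \<ge> k} \<omega>)
                   / measure M {\<omega> \<in> space M. N t \<omega> \<ge> k})
               \<longlongrightarrow> integral\<^sup>L H (\<lambda>w. \<Sum>i=1..CARD('d) - k. ord_stat w i)
                   / integral\<^sup>L H (\<lambda>w. ord_stat w (CARD('d) - k + 1))) at_top)"
proof -
  note count = standardised_count[OF N_def[THEN meta_eq_to_obj_eq] prob rv F_def F_cont]
  have tail: "((\<lambda>t. t * measure M {\<omega> \<in> space M. k \<le> N t \<omega>})
      \<longlongrightarrow> integral\<^sup>L H (kth_largest k)) at_top" if "1 \<le> k" "k \<le> CARD('d)" for k
    using exceedance_count_limit[OF prob _ mu H vague that] unfolding Y_def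
    by (rule Lim_transform_eventually[OF _ eventually_mono[OF eventually_gt_at_top[of 0]]])
      (auto simp: count(1,2))
  have max: "((\<lambda>t. t * measure M {\<omega> \<in> space M. N t \<omega> \<ge> 1})
      \<longlongrightarrow> integral\<^sup>L H (\<lambda>w. Max (range w))) at_top"
    using tail[of 1] by (simp add: ord_stat_max)
  have "{\<omega> \<in> space M. N t \<omega> = CARD('d)} = {\<omega> \<in> space M. CARD('d) \<le> N t \<omega>}" for t
    using count(3) by (auto intro: antisym)
  then have min: "((\<lambda>t. t * measure M {\<omega> \<in> space M. N t \<omega> = CARD('d)})
      \<longlongrightarrow> integral\<^sup>L H (\<lambda>w. Min (range w))) at_top"
    using tail[of "CARD('d)"] by (simp add: ord_stat_min[unfolded One_nat_def])
  show ?thesis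
    using tail max min spectral_conditional_excess_limit[OF prob mu H count(3,4) tail]
    by auto
qed

end
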